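(* Let $\mathcal{E}_{tr}$ be a finite set of training environments, $\mathcal{H}_\Phi$ a class of representations $\Phi:\mathcal{X}\to\mathcal{Z}$ and $\mathcal{H}_w$ a class of classifiers $w:\mathcal{Z}\to\mathbb{R}^k$ satisfying affine closure (for all $w_1,w_2\in\mathcal{H}_w$ and $c\in\mathbb{R}$, the pointwise sum $w_1+w_2$ and pointwise multiple $cw$ lie in $\mathcal{H}_w$). Then $\hat{\mathcal{S}}^{\mathsf{IV}}=\hat{\mathcal{S}}^{\mathsf{EIRM}}$.
   Context: For each environment $e\in\mathcal{E}_{tr}$ there is a distribution of $(X^e,Y^e)$ with $X^e\in\mathcal{X}\subseteq\mathbb{R}^n$, $Y^e\in\mathcal{Y}\subseteq\mathbb{R}^k$; for a loss $\ell$, $R^e(f)=\mathbb{E}[\ell(f(X^e),Y^e)]$. $\mathcal{Z}\subseteq\mathbb{R}^d$. $\mathcal{S}^{\mathsf{IV}}$ is the set of $(\Phi,w)\in\mathcal{H}_\Phi\times\mathcal{H}_w$ with $R^e(w\circ\Phi)\le R^e(\bar w\circ\Phi)$ for all $\bar w\in\mathcal{H}_w$ and all $e\in\mathcal{E}_{tr}$; the set of invariant predictors is $\hat{\mathcal{S}}^{\mathsf{IV}}=\{w\circ\Phi:(\Phi,w)\in\mathcal{S}^{\mathsf{IV}}\}$. Ensemble game: given $\Phi\in\mathcal{H}_\Phi$, each environment $e$ chooses $w^e\in\mathcal{H}_w$ with utility $u_e=-R^e(w^{av}\circ\Phi)$, $w^{av}=\frac{1}{|\mathcal{E}_{tr}|}\sum_q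 w^q$. $\mathcal{S}^{\mathsf{EIRM}}$ is the set of $(\Phi,\{w^q\}_{q\in\mathcal{E}_{tr}})$ with $\Phi\in\mathcal{H}_\Phi$ and $\{w^q\}$ a pure Nash equilibrium of this game given $\Phi$ (no player can strictly increase its utility by unilaterally changing its $w^e$ within $\mathcal{H}_w$). $\hat{\mathcal{S}}^{\mathsf{EIRM}}=\{(\frac{1}{|\mathcal{E}_{tr}|}\sum_q w^q)\circ\Phi : (\Phi,\{w^q\})\in\mathcal{S}^{\mathsf{EIRM}}\}$. *)

theory Defs
  imports "HOL-Probability.Probability"
begin

definition risk ::
  "('e \<Rightarrow> ((real^'n) \<times> (real^'k)) measure) \<Rightarrow> (real^'k \<Rightarrow> real^'k \<Rightarrow> real)
   \<Rightarrow> 'e \<Rightarrow> (real^'n \<Rightarrow> real^'k) \<Rightarrow> real" where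
  "risk M loss e f = (\<integral>p. loss (f (fst p)) (snd p) \<partial>(M e))"

definition affine_closed :: "('z \<Rightarrow> real^'k) set \<Rightarrow> bool" where
  "affine_closed Hw \<longleftrightarrow>
     (\<forall>w1\<in>Hw. \<forall>w2\<in>Hw. (\<lambda>z. w1 z + w2 z) \<in> Hw) \<and>
     (\<forall>w\<in>Hw. \<forall>c::real. (\<lambda>z. c *\<^sub>R w z) \<in> Hw)"

definition S_IV ::
  "'e set \<Rightarrow> ('e \<Rightarrow> ((real^'n) \<times> (real^'k)) measure) \<Rightarrow> (real^'k \<Rightarrow> real^'k \<Rightarrow> real)
   \<Rightarrow> (real^'n \<Rightarrow> real^'d) set \<Rightarrow> (real^'d \<Rightarrow> real^'k) set
   \<Rightarrow> ((real^'n \<Rightarrow> real^'d) \<times> (real^'d \<Rightarrow> real^'k)) set" where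
  "S_IV E M loss HPhi Hw =
     {(\<Phi>, w). \<Phi> \<in> HPhi \<and> w \<in> Hw \<and>
        (\<forall>e\<in>E. \<forall>w'\<in>Hw. risk M loss e (w \<circ> \<Phi>) \<le> risk M loss e (w' \<circ> \<Phi>))}"

definition S_IV_hat where
  "S_IV_hat E M loss HPhi Hw = {w \<circ> \<Phi> | \<Phi> w. (\<Phi>, w) \<in> S_IV E M loss HPhi Hw}"

definition w_avg :: "'e set \<Rightarrow> ('e \<Rightarrow> 'z \<Rightarrow> real^'k) \<Rightarrow> 'z \<Rightarrow> real^'k" where
  "w_avg E ws = (\<lambda>z. (1 / real (card E)) *\<^sub>R (\<Sum>q\<in>E. ws q z))"

definition is_NE ::
  "'e set \<Rightarrow> ('e \<Rightarrow> ((real^'n) \<times> (real^'k)) measure) \<Rightarrow> (real^'k \<Rightarrow> real^'k \<Rightarrow> real)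
   \<Rightarrow> (real^'d \<Rightarrow> real^'k) set \<Rightarrow> (real^'n \<Rightarrow> real^'d)
   \<Rightarrow> ('e \<Rightarrow> real^'d \<Rightarrow> real^'k) \<Rightarrow> bool" where
  "is_NE E M loss Hw \<Phi> ws \<longleftrightarrow>
     (\<forall>q\<in>E. ws q \<in> Hw) \<and>
     (\<forall>e\<in>E. \<forall>w'\<in>Hw.
        - risk M loss e (w_avg E (ws(e := w')) \<circ> \<Phi>) \<le> - risk M loss e (w_avg E ws \<circ> \<Phi>))"

definition S_EIRM where
  "S_EIRM E M loss HPhi Hw = {(\<Phi>, ws). \<Phi> \<in> HPhi \<and> is_NE E M loss Hw \<Phi> ws}"

definition S_EIRM_hat where
  "S_EIRM_hat E M loss HPhi Hw =
     {w_avg E ws \<circ> \<Phi> | \<Phi> ws. (\<Phi>, ws) \<in> S_EIRM E M loss HPhi Hw}"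

end

theory Submission
  imports Defs
begin

text \<open>With an affinely closed class of classifiers, a single environment can move the average
  classifier to any member of the class by a unilateral deviation: replacing its own \<open>w\<^sup>e\<close> by
  \<open>w\<^sup>e + |E| (w - w\<^sub>a\<^sub>v)\<close> turns the average into \<open>w\<close>. Hence a profile is a Nash equilibrium iff
  its average is optimal in every environment, i.e. iff it yields an invariant predictor; conversely,
  an invariant classifier used by every environment is an equilibrium with itself as average.
  Neither the loss nor the probability structure of the environments plays any role.\<close>

lemma affine_closed_add:
  "affine_closed Hw \<Longrightarrow> w1 \<in> Hw \<Longrightarrow> w2 \<in> Hw \<Longrightarrow> (\<lambda>z. w1 z + w2 z) \<in> Hw"
  unfolding affine_closed_def by blast

lemma affine_closed_scaleR:
  "affine_closed Hw \<Longrightarrow> w \<in> Hw \<Longrightarrow> (\<lambda>z. c *\<^sub>R w z) \<in> Hw"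
  unfolding affine_closed_def by blast

lemma affine_closed_sum:
  assumes "affine_closed Hw" "finite E" "E \<noteq> {}" "\<forall>q\<in>E. ws q \<in> Hw"
  shows "(\<lambda>z. \<Sum>q\<in>E. ws q z) \<in> Hw"
  using assms(2-4)
proof (induction E rule: finite_ne_induct)
  case (singleton q)
  then show ?case by simp
next
  case (insert q F)
  then have "(\<lambda>z. ws q z + (\<Sum>p\<in>F. ws p z)) \<in> Hw"
    by (intro affine_closed_add[OF assms(1)]) auto
  with insert show ?case by simp
qed

lemma w_avg_in_affine_closed:
  assumes "affine_closed Hw" "finite E" "E \<noteq> {}" "\<forall>q\<in>E. ws q \<in> Hw"
  shows "w_avg E ws \<in> Hw"
  unfolding w_avg_def by (rule affine_closed_scaleR[OF assms(1) affine_closed_sum[OF assms]])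

lemma w_avg_const:
  assumes "finite E" "E \<noteq> {}"
  shows "w_avg E (\<lambda>q. w) = w"
  using assms by (simp add: w_avg_def fun_eq_iff sum_constant_scaleR del: sum_constant)

lemma w_avg_fun_upd:
  assumes "finite E" "e \<in> E"
  shows "w_avg E (ws(e := w')) z = w_avg E ws z + (1 / real (card E)) *\<^sub>R (w' z - ws e z)"
proof -
  have "(\<Sum>q\<in>E. (ws(e := w')) q z) = w' z + (\<Sum>q\<in>E - {e}. ws q z)"
    using assms by (simp add: sum.remove)
  also have "\<dots> = (\<Sum>q\<in>E. ws q z) + (w' z - ws e z)"
    using assms by (simp add: sum.remove)
  finally show ?thesis
    by (simp add: w_avg_def scaleR_add_right)
qed

lemma w_avg_unilateral_deviations:
  assumes Hw: "affine_closed Hw" and E: "finite E" "E \<noteq> {}" and "e \<in> E"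
    and ws: "\<forall>q\<in>E. ws q \<in> Hw"
  shows "(\<lambda>w'. w_avg E (ws(e := w'))) ` Hw = Hw"
proof
  show "(\<lambda>w'. w_avg E (ws(e := w'))) ` Hw \<subseteq> Hw"
    using ws by (auto intro!: w_avg_in_affine_closed[OF Hw E])
next
  show "Hw \<subseteq> (\<lambda>w'. w_avg E (ws(e := w'))) ` Hw"
  proof
    fix w assume w: "w \<in> Hw"
    let ?n = "real (card E)"
    define w' where "w' = (\<lambda>z. ws e z + (?n *\<^sub>R w z + (- ?n) *\<^sub>R w_avg E ws z))"
    have "w' \<in> Hw"
      unfolding w'_def using \<open>e \<in> E\<close> ws w w_avg_in_affine_closed[OF Hw E ws]
      by (intro affine_closed_add[OF Hw] affine_closed_scaleR[OF Hw]) auto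
    moreover have "w_avg E (ws(e := w')) = w"
      using E by (simp add: fun_eq_iff w_avg_fun_upd[OF E(1) \<open>e \<in> E\<close>] w'_def algebra_simps)
    ultimately show "w \<in> (\<lambda>w'. w_avg E (ws(e := w'))) ` Hw"
      by (metis image_eqI)
  qed
qed

lemma is_NE_iff_w_avg_optimal:
  assumes Hw: "affine_closed Hw" and E: "finite E" "E \<noteq> {}"
  shows "is_NE E M loss Hw \<Phi> ws \<longleftrightarrow>
    (\<forall>q\<in>E. ws q \<in> Hw) \<and>
    (\<forall>e\<in>E. \<forall>w\<in>Hw. risk M loss e (w_avg E ws \<circ> \<Phi>) \<le> risk M loss e (w \<circ> \<Phi>))"
proof (cases "\<forall>q\<in>E. ws q \<in> Hw")
  case False
  then show ?thesis unfolding is_NE_def by blast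
next
  case ws: True
  have "(\<forall>w'\<in>Hw. risk M loss e (w_avg E ws \<circ> \<Phi>) \<le> risk M loss e (w_avg E (ws(e := w')) \<circ> \<Phi>))
    \<longleftrightarrow> (\<forall>w\<in>Hw. risk M loss e (w_avg E ws \<circ> \<Phi>) \<le> risk M loss e (w \<circ> \<Phi>))"
    if "e \<in> E" for e
  proof -
    let ?optimal = "\<lambda>w. risk M loss e (w_avg E ws \<circ> \<Phi>) \<le> risk M loss e (w \<circ> \<Phi>)"
    have "(\<forall>w\<in>Hw. ?optimal w) \<longleftrightarrow> (\<forall>w\<in>(\<lambda>w'. w_avg E (ws(e := w'))) ` Hw. ?optimal w)"
      by (simp only: w_avg_unilateral_deviations[OF Hw E that ws])
    then show ?thesis by simp
  qed
  with ws show ?thesis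
    unfolding is_NE_def by simp
qed

theorem corollary1:
  fixes E :: "'e set"
    and M :: "'e \<Rightarrow> ((real^'n) \<times> (real^'k)) measure"
    and loss :: "real^'k \<Rightarrow> real^'k \<Rightarrow> real"
    and HPhi :: "(real^'n \<Rightarrow> real^'d) set"
    and Hw :: "(real^'d \<Rightarrow> real^'k) set"
  assumes "finite E" and "E \<noteq> {}"
    and "\<And>e. e \<in> E \<Longrightarrow> prob_space (M e)"
    and "affine_closed Hw"
  shows "S_IV_hat E M loss HPhi Hw = S_EIRM_hat E M loss HPhi Hw"
proof -
  note NE_iff = is_NE_iff_w_avg_optimal[OF assms(4,1,2)]
  have "w \<circ> \<Phi> = w_avg E (\<lambda>q. w) \<circ> \<Phi> \<and> (\<Phi>, \<lambda>q. w) \<in> S_EIRM E M loss HPhi Hw"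
    if "(\<Phi>, w) \<in> S_IV E M loss HPhi Hw" for \<Phi> w
    using that by (simp add: S_IV_def S_EIRM_def NE_iff w_avg_const[OF assms(1,2)])
  moreover have "(\<Phi>, w_avg E ws) \<in> S_IV E M loss HPhi Hw"
    if "(\<Phi>, ws) \<in> S_EIRM E M loss HPhi Hw" for \<Phi> ws
    using that w_avg_in_affine_closed[OF assms(4,1,2)] by (simp add: S_IV_def S_EIRM_def NE_iff)
  ultimately show ?thesis
    unfolding S_IV_hat_def S_EIRM_hat_def by blast
qed

end
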